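(* Let $N\ge 3$, $\alpha\in(0,N)$, $s\in(1,N/\alpha)$, and let $\{g_n\}\subset L^1(\mathbb{R}^N)\cap L^s(\mathbb{R}^N)$ be bounded both in $L^1(\mathbb{R}^N)$ and in $L^s(\mathbb{R}^N)$, such that (up to subsequences) for every bounded domain $\Omega\subset\mathbb{R}^N$, $g_n\to0$ strongly in $L^s(\Omega)$ as $n\to\infty$. Then, passing to a subsequence if necessary, $(I_\alpha\ast g_n)(x)\to0$ for a.e. $x\in\mathbb{R}^N$ as $n\to\infty$.
   Context: $I_\alpha(x)=A_\alpha|x|^{-(N-\alpha)}$ for $x\ne0$, with $A_\alpha=\frac{\Gamma((N-\alpha)/2)}{\Gamma(\alpha/2)\pi^{N/2}2^\alpha}$. *)

theory Defs
  imports "HOL-Analysis.Analysis"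
begin

definition riesz_const :: "nat \<Rightarrow> real \<Rightarrow> real" where
  "riesz_const N \<alpha> = Gamma ((real N - \<alpha>) / 2) /
      (Gamma (\<alpha> / 2) * pi powr (real N / 2) * 2 powr \<alpha>)"

text \<open>Riesz potential I_alpha(x) = A_alpha |x|^(-(N-alpha)) for x \<noteq> 0, N = CARD('n);
  the value at 0 (a null set) is set to 0.\<close>
definition riesz_pot :: "real \<Rightarrow> real ^ 'n \<Rightarrow> real" where
  "riesz_pot \<alpha> x = (if x = 0 then 0
      else riesz_const CARD('n) \<alpha> * norm x powr (- (real CARD('n) - \<alpha>)))"

definition riesz_conv :: "real \<Rightarrow> (real ^ 'n \<Rightarrow> real) \<Rightarrow> real ^ 'n \<Rightarrow> real" where
  "riesz_conv \<alpha> g x = (\<integral>y. riesz_pot \<alpha> (x - y) * g y \<partial>lebesgue)"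

end

theory Submission
  imports Defs
begin

text \<open>
  Write \<open>b = N - \<alpha>\<close>. The kernel \<open>|z| powr -b\<close> is integrable near the origin, so the potential
  \<open>h\<^sub>R(y) = \<integral> |x - y| powr -b dx\<close> of the ball \<open>B(0, R)\<close> is bounded and tends to \<open>0\<close> as \<open>|y| \<rightarrow> \<infinity>\<close>.
  By Tonelli the integral of \<open>|z| powr -b * |g\<^sub>n|\<close> over \<open>B(0, R)\<close> equals \<open>\<integral> |g\<^sub>n| h\<^sub>R\<close>; splitting at
  \<open>|y| = M\<close>, the inner part tends to \<open>0\<close> because local \<open>L\<^sup>s\<close> convergence implies local \<open>L\<^sup>1\<close>
  convergence, and the outer part is small uniformly in \<open>n\<close> by the \<open>L\<^sup>1\<close> bound. So \<open>I\<^sub>\<alpha> * |g\<^sub>n| \<rightarrow> 0\<close>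
  in \<open>L\<^sup>1\<close> on every ball, and a subsequence along which the integrals over \<open>B(0, k + 1)\<close> are summable
  converges almost everywhere.
\<close>

lemma borel_ball [measurable]: "ball c r \<in> sets borel"
  by (simp add: borel_open)

lemma borel_cball [measurable]: "cball c r \<in> sets borel"
  by (simp add: borel_closed)

lemma ennreal_tendsto_zeroI:
  fixes f :: "'a \<Rightarrow> ennreal"
  assumes "\<And>\<epsilon>. \<epsilon> > 0 \<Longrightarrow> eventually (\<lambda>n. f n \<le> ennreal \<epsilon>) F"
  shows "(f \<longlongrightarrow> 0) F"
proof (rule order_tendstoI)
  fix e :: ennreal assume "0 < e"
  obtain \<epsilon> where "0 < \<epsilon>" "ennreal \<epsilon> < e"
  proof (cases e rule: ennreal_cases)
    case (real r)
    with \<open>0 < e\<close> show ?thesis by (intro that[of "r / 2"]) (auto simp: ennreal_lessI)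
  qed (auto intro: that[of 1])
  thus "eventually (\<lambda>n. f n < e) F"
    using assms[of \<epsilon>] by (auto elim: eventually_mono)
qed simp

lemma ennreal_suminf_neq_top_LIMSEQ_zero:
  fixes t :: "nat \<Rightarrow> ennreal"
  assumes "(\<Sum>k. t k) \<noteq> \<infinity>"
  shows "t \<longlonglongrightarrow> 0"
proof -
  have "t k \<le> (\<Sum>k. t k)" for k
    using ennreal_suminf_lessD linorder_not_less by blast
  hence "t k \<noteq> \<infinity>" for k
    using assms neq_top_trans by auto
  hence t: "t = (\<lambda>k. ennreal (enn2real (t k)))" by (simp add: ennreal_enn2real_if)
  with assms have "summable (\<lambda>k. enn2real (t k))" by (intro summable_suminf_not_top) auto
  hence "(\<lambda>k. ennreal (enn2real (t k))) \<longlonglongrightarrow> ennreal 0"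
    by (intro tendsto_ennrealI summable_LIMSEQ_zero)
  with t show ?thesis by simp
qed

lemma nn_integral_lborel_translate:
  fixes f :: "'a::euclidean_space \<Rightarrow> ennreal"
  assumes [measurable]: "f \<in> borel_measurable borel"
  shows "(\<integral>\<^sup>+x. f (x - y) \<partial>lborel) = (\<integral>\<^sup>+z. f z \<partial>lborel)"
proof -
  have "(\<integral>\<^sup>+z. f z \<partial>lborel) = (\<integral>\<^sup>+z. f z \<partial>distr lborel borel ((+) (- y)))"
    by (simp add: lborel_distr_plus)
  also have "\<dots> = (\<integral>\<^sup>+x. f (- y + x) \<partial>lborel)"
    by (rule nn_integral_distr) auto
  finally show ?thesis by simp
qed

lemma dyadic_bracket:
  fixes t :: real
  assumes "0 < t" "t < 1"
  obtains k :: nat where "(1/2)^(k+1) < t" "t \<le> (1/2)^k"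
proof -
  define L where "L = log 2 (1/t)"
  define k where "k = nat \<lfloor>L\<rfloor>"
  have "L > 0" using assms by (simp add: L_def)
  hence k: "real k \<le> L" "L < real k + 1" by (simp_all add: k_def)
  have "2 powr real k \<le> 2 powr L" using k by simp
  hence "2 ^ k \<le> 1/t" using assms by (simp add: L_def powr_realpow)
  hence "t \<le> (1/2) ^ k" using assms by (simp add: field_simps)
  moreover have "2 powr L < 2 powr (real k + 1)" using k by simp
  hence "1/t < 2 ^ (k + 1)" using assms by (simp add: L_def powr_add flip: powr_realpow)
  hence "(1/2) ^ (k + 1) < t" using assms by (simp add: field_simps)
  ultimately show ?thesis using that by blast
qed

lemma le_add_powr_scaled:
  fixes t \<delta> s :: real
  assumes "0 \<le> t" "0 < \<delta>" "1 < s"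
  shows "t \<le> \<delta> + \<delta> powr (1 - s) * t powr s"
proof (cases "t \<le> \<delta>")
  case False
  hence "\<delta> powr (s - 1) \<le> t powr (s - 1)" using assms by (intro powr_mono2) auto
  hence "\<delta> powr (1 - s) * \<delta> powr (s - 1) * t \<le> \<delta> powr (1 - s) * t powr (s - 1) * t"
    using assms by (intro mult_right_mono mult_left_mono) auto
  moreover have "\<delta> powr (1 - s) * \<delta> powr (s - 1) = 1"
    using assms by (simp flip: powr_add)
  moreover have "t powr (s - 1) * t = t powr s"
    using powr_mult_base[of t "s - 1"] assms False by (simp add: mult.commute)
  ultimately show ?thesis using assms by (simp add: mult.assoc add_increasing)
qed (simp add: add_increasing2)

lemma set_nn_integral_abs_le_powr:
  fixes g :: "'a \<Rightarrow> real" and s \<delta> :: real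
  assumes s: "1 < s" and "0 < \<delta>" and A: "A \<in> sets M"
    and [measurable]: "g \<in> borel_measurable M"
    and int: "integrable M (\<lambda>x. \<bar>g x\<bar> powr s)"
  shows "(\<integral>\<^sup>+x. indicator A x * ennreal \<bar>g x\<bar> \<partial>M)
    \<le> ennreal \<delta> * emeasure M A + ennreal (\<delta> powr (1 - s) * (LINT x:A|M. \<bar>g x\<bar> powr s))"
proof -
  have pointwise: "indicator A x * ennreal \<bar>g x\<bar>
      \<le> ennreal \<delta> * indicator A x + ennreal (\<delta> powr (1 - s)) * ennreal (indicator A x * \<bar>g x\<bar> powr s)" for x
  proof (cases "x \<in> A")
    case True
    have "ennreal \<bar>g x\<bar> \<le> ennreal (\<delta> + \<delta> powr (1 - s) * \<bar>g x\<bar> powr s)"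
      using le_add_powr_scaled[OF _ \<open>0 < \<delta>\<close> s] by (intro ennreal_leI) simp
    thus ?thesis using True \<open>0 < \<delta>\<close> by (simp add: ennreal_plus ennreal_mult)
  qed simp
  have "(\<integral>\<^sup>+x. indicator A x * ennreal \<bar>g x\<bar> \<partial>M)
      \<le> (\<integral>\<^sup>+x. ennreal \<delta> * indicator A x
            + ennreal (\<delta> powr (1 - s)) * ennreal (indicator A x * \<bar>g x\<bar> powr s) \<partial>M)"
    by (rule nn_integral_mono) (rule pointwise)
  also have "\<dots> = ennreal \<delta> * emeasure M A
      + ennreal (\<delta> powr (1 - s)) * (\<integral>\<^sup>+x. ennreal (indicator A x * \<bar>g x\<bar> powr s) \<partial>M)"
    using A by (simp add: nn_integral_add nn_integral_cmult nn_integral_cmult_indicator)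
  also have "(\<integral>\<^sup>+x. ennreal (indicator A x * \<bar>g x\<bar> powr s) \<partial>M) = ennreal (LINT x:A|M. \<bar>g x\<bar> powr s)"
    unfolding set_lebesgue_integral_def using integrable_mult_indicator[OF A int]
    by (subst nn_integral_eq_integral) (auto simp: indicator_def)
  also have "ennreal (\<delta> powr (1 - s)) * ennreal (LINT x:A|M. \<bar>g x\<bar> powr s)
      = ennreal (\<delta> powr (1 - s) * (LINT x:A|M. \<bar>g x\<bar> powr s))"
    unfolding set_lebesgue_integral_def by (simp add: ennreal_mult integral_nonneg_AE)
  finally show ?thesis .
qed

lemma set_nn_integral_abs_tendsto_zero_if_Lp:
  fixes g :: "nat \<Rightarrow> 'a \<Rightarrow> real" and s :: real
  assumes s: "1 < s" and A: "A \<in> sets M" "emeasure M A < \<infinity>"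
    and [measurable]: "\<And>n. g n \<in> borel_measurable M"
    and int: "\<And>n. integrable M (\<lambda>x. \<bar>g n x\<bar> powr s)"
    and Lp: "(\<lambda>n. (LINT x:A|M. \<bar>g n x\<bar> powr s) powr (1 / s)) \<longlonglongrightarrow> 0"
  shows "(\<lambda>n. \<integral>\<^sup>+x. indicator A x * ennreal \<bar>g n x\<bar> \<partial>M) \<longlonglongrightarrow> 0"
proof (rule ennreal_tendsto_zeroI)
  fix \<epsilon> :: real assume "0 < \<epsilon>"
  define S where "S n = (LINT x:A|M. \<bar>g n x\<bar> powr s)" for n
  have S_nonneg: "S n \<ge> 0" for n
    unfolding S_def set_lebesgue_integral_def by (intro integral_nonneg_AE) auto
  moreover have "(\<lambda>n. (S n powr (1 / s)) powr s) \<longlonglongrightarrow> 0"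
    using Lp s by (intro tendsto_zero_powrI[of _ _ "\<lambda>_. s" s]) (auto simp: S_def)
  ultimately have "S \<longlonglongrightarrow> 0" using s by (simp add: powr_powr)
  define V where "V = measure M A"
  have V: "emeasure M A = ennreal V" "0 \<le> V"
    using A by (simp_all add: V_def emeasure_eq_ennreal_measure less_top)
  define \<delta> where "\<delta> = \<epsilon> / (2 * (V + 1))"
  have "0 < \<delta>" "\<delta> * V \<le> \<epsilon> / 2"
    using \<open>0 < \<epsilon>\<close> V(2) by (auto simp: \<delta>_def field_simps)
  have "(\<lambda>n. \<delta> powr (1 - s) * S n) \<longlonglongrightarrow> \<delta> powr (1 - s) * 0"
    by (intro tendsto_mult tendsto_const \<open>S \<longlonglongrightarrow> 0\<close>)
  hence "eventually (\<lambda>n. \<delta> powr (1 - s) * S n < \<epsilon> / 2) sequentially"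
    using \<open>0 < \<epsilon>\<close> by (intro order_tendstoD(2)) auto
  thus "eventually (\<lambda>n. (\<integral>\<^sup>+x. indicator A x * ennreal \<bar>g n x\<bar> \<partial>M) \<le> ennreal \<epsilon>) sequentially"
  proof (rule eventually_mono)
    fix n assume small: "\<delta> powr (1 - s) * S n < \<epsilon> / 2"
    have "(\<integral>\<^sup>+x. indicator A x * ennreal \<bar>g n x\<bar> \<partial>M) \<le> ennreal \<delta> * ennreal V + ennreal (\<delta> powr (1 - s) * S n)"
      using set_nn_integral_abs_le_powr[OF s \<open>0 < \<delta>\<close> A(1) _ int] by (simp add: S_def V(1))
    also have "\<dots> = ennreal (\<delta> * V + \<delta> powr (1 - s) * S n)"
      using \<open>0 < \<delta>\<close> V(2) S_nonneg[of n] by (simp flip: ennreal_mult ennreal_plus)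
    also have "\<dots> \<le> ennreal \<epsilon>"
      using small \<open>\<delta> * V \<le> \<epsilon> / 2\<close> by (intro ennreal_leI) linarith
    finally show "(\<integral>\<^sup>+x. indicator A x * ennreal \<bar>g n x\<bar> \<partial>M) \<le> ennreal \<epsilon>" .
  qed
qed

lemma subseq_geometric_bound:
  fixes a :: "nat \<Rightarrow> nat \<Rightarrow> ennreal"
  assumes "\<And>k. (\<lambda>n. a k n) \<longlonglongrightarrow> 0"
  obtains r where "strict_mono r" "\<And>k. a k (r k) \<le> ennreal ((1/2)^k)"
proof -
  have "eventually (\<lambda>n. a k n < ennreal ((1/2)^k)) sequentially" for k
    using assms by (intro order_tendstoD(2)) auto
  hence small: "\<exists>n>m. a k n \<le> ennreal ((1/2)^k)" for k m
    unfolding eventually_sequentially by (metis less_imp_le max.cobounded1 max.cobounded2 le_imp_less_Suc)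
  have "\<exists>r. \<forall>k. a k (r k) \<le> ennreal ((1/2)^k) \<and> r k < r (Suc k)"
    using small[of 0 0] small by (intro dependent_nat_choice) blast+
  thus ?thesis using that by (auto simp: strict_mono_Suc_iff)
qed

lemma AE_subseq_tendsto_zero_if_local_nn_integral:
  fixes F :: "nat \<Rightarrow> 'a::euclidean_space \<Rightarrow> ennreal"
  assumes [measurable]: "\<And>n. F n \<in> borel_measurable lborel"
    and local: "\<And>R. 0 < R \<Longrightarrow> (\<lambda>n. \<integral>\<^sup>+x. indicator (ball 0 R) x * F n x \<partial>lborel) \<longlonglongrightarrow> 0"
  obtains r where "strict_mono r" "AE x in lborel. (\<lambda>k. F (r k) x) \<longlonglongrightarrow> 0"
proof -
  have "(\<lambda>n. \<integral>\<^sup>+x. indicator (ball 0 (real k + 1)) x * F n x \<partial>lborel) \<longlonglongrightarrow> 0" for k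
    by (rule local) simp
  then obtain r where r: "strict_mono r"
    "\<And>k. (\<integral>\<^sup>+x. indicator (ball 0 (real k + 1)) x * F (r k) x \<partial>lborel) \<le> ennreal ((1/2)^k)"
    by (rule subseq_geometric_bound[of "\<lambda>k n. \<integral>\<^sup>+x. indicator (ball 0 (real k + 1)) x * F n x \<partial>lborel"]) blast
  txt \<open>\<open>G\<close> has finite integral, hence is finite a.e., and then its terms tend to \<open>0\<close>.\<close>
  define G where "G x = (\<Sum>k. indicator (ball 0 (real k + 1)) x * F (r k) x)" for x
  have "(\<integral>\<^sup>+x. G x \<partial>lborel) = (\<Sum>k. \<integral>\<^sup>+x. indicator (ball 0 (real k + 1)) x * F (r k) x \<partial>lborel)"
    unfolding G_def by (rule nn_integral_suminf) measurable
  also have "\<dots> \<le> (\<Sum>k. ennreal ((1/2)^k))"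
    using r(2) by (intro suminf_le) auto
  also have "\<dots> < \<infinity>"
    unfolding infinity_ennreal_def less_top[symmetric]
    by (rule ennreal_suminf_neq_top) (auto intro: summable_geometric)
  finally have "AE x in lborel. G x \<noteq> \<infinity>"
    by (intro nn_integral_PInf_AE) (auto simp: G_def)
  hence "AE x in lborel. (\<lambda>k. F (r k) x) \<longlonglongrightarrow> 0"
  proof eventually_elim
    case (elim x)
    hence "(\<lambda>k. indicator (ball 0 (real k + 1)) x * F (r k) x) \<longlonglongrightarrow> 0"
      unfolding G_def by (rule ennreal_suminf_neq_top_LIMSEQ_zero)
    moreover obtain N :: nat where "norm x < real N" using reals_Archimedean2 by blast
    hence "eventually (\<lambda>k. indicator (ball 0 (real k + 1)) x * F (r k) x = F (r k) x) sequentially"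
      by (auto simp: eventually_sequentially intro!: exI[of _ N])
    ultimately show ?case by (rule Lim_transform_eventually)
  qed
  with r(1) that show ?thesis by blast
qed

definition riesz_kernel :: "real \<Rightarrow> 'a::real_normed_vector \<Rightarrow> real" where
  "riesz_kernel b z = (if z = 0 then 0 else norm z powr (- b))"

lemma riesz_kernel_nonneg: "riesz_kernel b z \<ge> 0"
  by (simp add: riesz_kernel_def)

lemma borel_measurable_riesz_kernel [measurable]: "riesz_kernel b \<in> borel_measurable borel"
  unfolding riesz_kernel_def by measurable

lemma riesz_kernel_unit_ball_le_dyadic_sum:
  assumes "0 < b"
  shows "indicator (ball 0 1) z * ennreal (riesz_kernel b z)
    \<le> (\<Sum>k. ennreal (2 powr (real (k+1) * b)) * indicator (cball 0 ((1/2)^k)) z)"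
proof (cases "z = 0 \<or> norm z \<ge> 1")
  case False
  then obtain k where k: "(1/2)^(k+1) < norm z" "norm z \<le> (1/2)^k"
    using dyadic_bracket[of "norm z"] by auto
  have "riesz_kernel b z = norm z powr (- b)" using False by (simp add: riesz_kernel_def)
  also have "\<dots> \<le> ((1/2)^(k+1)) powr (- b)" using k assms by (intro powr_mono2') auto
  also have "\<dots> = 2 powr (real (k+1) * b)"
  proof -
    have "(1/2::real)^(k+1) = 2 powr (- real (k+1))"
      by (simp only: powr_minus_divide powr_realpow[OF zero_less_numeral] power_one_over)
    thus ?thesis by (simp add: powr_powr algebra_simps)
  qed
  finally have "indicator (ball 0 1) z * ennreal (riesz_kernel b z)
      \<le> ennreal (2 powr (real (k+1) * b)) * indicator (cball 0 ((1/2)^k)) z"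
    using k False by (auto simp: indicator_def intro!: ennreal_leI)
  also have "\<dots> \<le> (\<Sum>k. ennreal (2 powr (real (k+1) * b)) * indicator (cball 0 ((1/2)^k)) z)"
    using ennreal_suminf_lessD linorder_not_less by blast
  finally show ?thesis .
qed (auto simp: riesz_kernel_def indicator_def)

lemma nn_integral_unit_ball_riesz_kernel_finite:
  fixes b :: real
  assumes b: "0 < b" "b < DIM('a)"
  shows "(\<integral>\<^sup>+z. indicator (ball 0 1) z * ennreal (riesz_kernel b (z::'a::euclidean_space)) \<partial>lborel) < \<infinity>"
proof -
  define V where "V = unit_ball_vol DIM('a)"
  define q where "q = (2::real) powr (b - DIM('a))"
  have q: "0 \<le> q" "q < 1" using b by (auto simp: q_def intro!: powr_less_one)
  have shell: "2 powr (real (k+1) * b) * (V * ((1/2)^k)^DIM('a)) = 2 powr b * V * q ^ k" for k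
  proof -
    have "((1/2::real)^k)^DIM('a) = 2 powr (- (real k * DIM('a)))"
      by (simp only: power_mult[symmetric] powr_minus_divide powr_realpow[OF zero_less_numeral, symmetric]
          power_one_over of_nat_mult) (simp add: powr_power mult.commute)
    moreover have "q ^ k = 2 powr (real k * (b - DIM('a)))" by (simp add: q_def powr_power)
    ultimately show ?thesis by (simp only:) (simp add: powr_add[symmetric] algebra_simps)
  qed
  have "(\<integral>\<^sup>+z. indicator (ball 0 1) z * ennreal (riesz_kernel b (z::'a)) \<partial>lborel)
      \<le> (\<integral>\<^sup>+z. (\<Sum>k. ennreal (2 powr (real (k+1) * b)) * indicator (cball 0 ((1/2)^k)) (z::'a)) \<partial>lborel)"
    by (rule nn_integral_mono) (rule riesz_kernel_unit_ball_le_dyadic_sum[OF b(1)])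
  also have "\<dots> = (\<Sum>k. \<integral>\<^sup>+z. ennreal (2 powr (real (k+1) * b)) * indicator (cball 0 ((1/2)^k)) (z::'a) \<partial>lborel)"
    by (rule nn_integral_suminf) measurable
  also have "\<dots> = (\<Sum>k. ennreal (2 powr b * V * q ^ k))"
  proof (rule suminf_cong)
    fix k
    have "(\<integral>\<^sup>+z. ennreal (2 powr (real (k+1) * b)) * indicator (cball 0 ((1/2)^k)) (z::'a) \<partial>lborel)
        = ennreal (2 powr (real (k+1) * b)) * emeasure lborel (cball (0::'a) ((1/2)^k))"
      by (rule nn_integral_cmult_indicator) simp
    also have "\<dots> = ennreal (2 powr (real (k+1) * b) * (V * ((1/2)^k)^DIM('a)))"
      by (simp add: emeasure_cball V_def ennreal_mult)
    finally show "(\<integral>\<^sup>+z. ennreal (2 powr (real (k+1) * b)) * indicator (cball 0 ((1/2)^k)) (z::'a) \<partial>lborel)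
        = ennreal (2 powr b * V * q ^ k)"
      by (simp only: shell)
  qed
  also have "\<dots> < \<infinity>"
    using q by (simp add: less_top[symmetric] V_def ennreal_suminf_neq_top summable_geometric)
  finally show ?thesis .
qed

definition ball_potential :: "real \<Rightarrow> real \<Rightarrow> 'a::euclidean_space \<Rightarrow> ennreal" where
  "ball_potential b R y = (\<integral>\<^sup>+x. indicator (ball 0 R) x * ennreal (riesz_kernel b (x - y)) \<partial>lborel)"

lemma ball_potential_bounded:
  fixes b :: real
  assumes b: "0 < b" "b < DIM('a)"
  obtains H where "H < \<infinity>" "\<And>y::'a::euclidean_space. ball_potential b R y \<le> H"
proof
  define J where "J = (\<integral>\<^sup>+z. indicator (ball 0 1) z * ennreal (riesz_kernel b (z::'a)) \<partial>lborel)"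
  show "J + emeasure lborel (ball (0::'a) R) < \<infinity>"
    using nn_integral_unit_ball_riesz_kernel_finite[OF b] emeasure_bounded_finite[of "ball (0::'a) R"]
    by (simp add: J_def less_top)
  fix y :: 'a
  have near_far: "indicator (ball 0 R) x * ennreal (riesz_kernel b (x - y))
      \<le> indicator (ball 0 1) (x - y) * ennreal (riesz_kernel b (x - y)) + indicator (ball 0 R) x" for x
  proof (cases "norm (x - y) < 1")
    case False
    hence "1 \<le> norm (x - y) powr b" using b by (intro ge_one_powr_ge_zero) auto
    hence "riesz_kernel b (x - y) \<le> 1" using False by (auto simp: riesz_kernel_def powr_minus_divide)
    thus ?thesis by (auto simp: indicator_def)
  qed (auto simp: indicator_def)
  have "ball_potential b R y
      \<le> (\<integral>\<^sup>+x. indicator (ball 0 1) (x - y) * ennreal (riesz_kernel b (x - y)) + indicator (ball 0 R) x \<partial>lborel)"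
    unfolding ball_potential_def by (rule nn_integral_mono) (rule near_far)
  also have "\<dots> = (\<integral>\<^sup>+x. indicator (ball 0 1) (x - y) * ennreal (riesz_kernel b (x - y)) \<partial>lborel)
      + emeasure lborel (ball (0::'a) R)"
    by (subst nn_integral_add) auto
  also have "(\<integral>\<^sup>+x. indicator (ball 0 1) (x - y) * ennreal (riesz_kernel b (x - y)) \<partial>lborel) = J"
    unfolding J_def by (rule nn_integral_lborel_translate) measurable
  finally show "ball_potential b R y \<le> J + emeasure lborel (ball (0::'a) R)" .
qed

lemma ball_potential_far:
  fixes y :: "'a::euclidean_space"
  assumes "0 < b" "0 < R" "R < M" "M \<le> norm y"
  shows "ball_potential b R y \<le> ennreal ((M - R) powr (- b)) * emeasure lborel (ball (0::'a) R)"
proof -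
  have pointwise: "indicator (ball 0 R) x * ennreal (riesz_kernel b (x - y))
      \<le> ennreal ((M - R) powr (- b)) * indicator (ball 0 R) x" for x :: 'a
  proof (cases "x \<in> ball 0 R")
    case True
    have "norm y - norm x \<le> norm (x - y)" by (metis norm_minus_commute norm_triangle_ineq2)
    with True assms have dist: "M - R < norm (x - y)" by simp
    hence "riesz_kernel b (x - y) \<le> (M - R) powr (- b)"
      using assms by (auto simp: riesz_kernel_def intro!: powr_mono2')
    thus ?thesis using True by (auto intro: ennreal_leI)
  qed simp
  have "ball_potential b R y \<le> (\<integral>\<^sup>+x. ennreal ((M - R) powr (- b)) * indicator (ball 0 R) (x::'a) \<partial>lborel)"
    unfolding ball_potential_def by (rule nn_integral_mono) (rule pointwise)
  thus ?thesis by (simp add: nn_integral_cmult_indicator)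
qed

lemma ball_potential_split:
  fixes b \<epsilon> :: real
  assumes b: "0 < b" "b < DIM('a)" and "0 < R" "0 < \<epsilon>"
  obtains M H where "0 < M" "H < \<infinity>"
    "\<And>y::'a::euclidean_space. ball_potential b R y \<le> H * indicator (ball 0 M) y + ennreal \<epsilon>"
proof -
  obtain H where H: "H < \<infinity>" "\<And>y::'a. ball_potential b R y \<le> H"
    using ball_potential_bounded[OF b] by blast
  define V where "V = unit_ball_vol DIM('a) * R ^ DIM('a)"
  have V: "emeasure lborel (ball (0::'a) R) = ennreal V" "0 \<le> V"
    using \<open>0 < R\<close> by (simp_all add: emeasure_ball V_def)
  have "filterlim (\<lambda>M. M - R) at_top at_top"
    using filterlim_tendsto_add_at_top[OF tendsto_const filterlim_ident, of "- R"] by simp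
  hence "((\<lambda>M. (M - R) powr (- b) * V) \<longlongrightarrow> 0 * V) at_top"
    using b by (intro tendsto_mult tendsto_const tendsto_neg_powr) auto
  hence "eventually (\<lambda>M. (M - R) powr (- b) * V < \<epsilon> \<and> R < M) at_top"
    using \<open>0 < \<epsilon>\<close> by (intro eventually_conj order_tendstoD(2) eventually_gt_at_top) auto
  then obtain M where M: "(M - R) powr (- b) * V < \<epsilon>" "R < M"
    by (auto simp: eventually_at_top_linorder)
  show ?thesis
  proof
    show "0 < M" "H < \<infinity>" using M \<open>0 < R\<close> H by auto
    fix y :: 'a
    show "ball_potential b R y \<le> H * indicator (ball 0 M) y + ennreal \<epsilon>"
    proof (cases "y \<in> ball 0 M")
      case True thus ?thesis using H(2)[of y] by (simp add: add_increasing2)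
    next
      case False
      hence "ball_potential b R y \<le> ennreal ((M - R) powr (- b) * V)"
        using ball_potential_far[OF b(1) \<open>0 < R\<close> M(2), of y] V unfolding V(1) by (simp add: ennreal_mult)
      also have "\<dots> \<le> ennreal \<epsilon>" using M by (intro ennreal_leI) simp
      finally show ?thesis using False by simp
    qed
  qed
qed

definition riesz_kernel_conv :: "real \<Rightarrow> ('a::euclidean_space \<Rightarrow> ennreal) \<Rightarrow> 'a \<Rightarrow> ennreal" where
  "riesz_kernel_conv b f x = (\<integral>\<^sup>+y. ennreal (riesz_kernel b (x - y)) * f y \<partial>lborel)"

lemma borel_measurable_riesz_kernel_conv [measurable]:
  assumes [measurable]: "f \<in> borel_measurable borel"
  shows "riesz_kernel_conv b f \<in> borel_measurable lborel"
  unfolding riesz_kernel_conv_def by measurable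

lemma nn_integral_ball_riesz_kernel_conv:
  fixes f :: "'a::euclidean_space \<Rightarrow> ennreal"
  assumes [measurable]: "f \<in> borel_measurable lborel"
  shows "(\<integral>\<^sup>+x. indicator (ball 0 R) x * riesz_kernel_conv b f x \<partial>lborel)
       = (\<integral>\<^sup>+y. f y * ball_potential b R y \<partial>lborel)"
proof -
  have "(\<integral>\<^sup>+x. indicator (ball 0 R) x * riesz_kernel_conv b f x \<partial>lborel)
      = (\<integral>\<^sup>+x. \<integral>\<^sup>+y. indicator (ball 0 R) x * ennreal (riesz_kernel b (x - y)) * f y \<partial>lborel \<partial>lborel)"
    unfolding riesz_kernel_conv_def by (intro nn_integral_cong) (simp add: nn_integral_cmult[symmetric] mult.assoc)
  also have "\<dots> = (\<integral>\<^sup>+y. \<integral>\<^sup>+x. indicator (ball 0 R) x * ennreal (riesz_kernel b (x - y)) * f y \<partial>lborel \<partial>lborel)"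
    by (rule lborel_pair.Fubini') measurable
  also have "\<dots> = (\<integral>\<^sup>+y. f y * ball_potential b R y \<partial>lborel)"
  proof (rule nn_integral_cong)
    fix y :: 'a
    have "(\<integral>\<^sup>+x. indicator (ball 0 R) x * ennreal (riesz_kernel b (x - y)) * f y \<partial>lborel)
        = (\<integral>\<^sup>+x. f y * (indicator (ball 0 R) x * ennreal (riesz_kernel b (x - y))) \<partial>lborel)"
      by (simp add: mult_ac)
    also have "\<dots> = f y * ball_potential b R y"
      unfolding ball_potential_def by (rule nn_integral_cmult) measurable
    finally show "(\<integral>\<^sup>+x. indicator (ball 0 R) x * ennreal (riesz_kernel b (x - y)) * f y \<partial>lborel)
        = f y * ball_potential b R y" .
  qed
  finally show ?thesis .
qed

lemma local_riesz_kernel_conv_tendsto_zero: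
  fixes f :: "nat \<Rightarrow> 'a::euclidean_space \<Rightarrow> ennreal" and b C R :: real
  assumes b: "0 < b" "b < DIM('a)" and "0 < R"
    and [measurable]: "\<And>n. f n \<in> borel_measurable lborel"
    and bounded: "\<And>n. (\<integral>\<^sup>+y. f n y \<partial>lborel) \<le> ennreal C"
    and local: "\<And>M. 0 < M \<Longrightarrow> (\<lambda>n. \<integral>\<^sup>+y. indicator (ball 0 M) y * f n y \<partial>lborel) \<longlonglongrightarrow> 0"
  shows "(\<lambda>n. \<integral>\<^sup>+x. indicator (ball 0 R) x * riesz_kernel_conv b (f n) x \<partial>lborel) \<longlonglongrightarrow> 0"
proof (rule ennreal_tendsto_zeroI)
  fix \<epsilon> :: real assume "0 < \<epsilon>"
  define C' where "C' = max C 0 + 1"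
  define \<delta> where "\<delta> = \<epsilon> / (2 * C')"
  have "0 < C'" "C \<le> C'" by (simp_all add: C'_def)
  hence "0 < \<delta>" "\<delta> * C' = \<epsilon> / 2" using \<open>0 < \<epsilon>\<close> by (simp_all add: \<delta>_def)
  obtain M H where M: "0 < M" "H < \<infinity>" "\<And>y::'a. ball_potential b R y \<le> H * indicator (ball 0 M) y + ennreal \<delta>"
    using ball_potential_split[OF b \<open>0 < R\<close> \<open>0 < \<delta>\<close>] by blast
  have "(\<lambda>n. H * \<integral>\<^sup>+y. indicator (ball 0 M) y * f n y \<partial>lborel) \<longlonglongrightarrow> H * 0"
    using M(2) local[OF M(1)] by (intro ennreal_tendsto_cmult) (simp_all add: less_top)
  hence "eventually (\<lambda>n. H * (\<integral>\<^sup>+y. indicator (ball 0 M) y * f n y \<partial>lborel) < ennreal (\<epsilon> / 2)) sequentially"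
    using \<open>0 < \<epsilon>\<close> by (intro order_tendstoD(2)) auto
  thus "eventually (\<lambda>n. (\<integral>\<^sup>+x. indicator (ball 0 R) x * riesz_kernel_conv b (f n) x \<partial>lborel)
      \<le> ennreal \<epsilon>) sequentially"
  proof (rule eventually_mono)
    fix n assume near: "H * (\<integral>\<^sup>+y. indicator (ball 0 M) y * f n y \<partial>lborel) < ennreal (\<epsilon> / 2)"
    have "(\<integral>\<^sup>+x. indicator (ball 0 R) x * riesz_kernel_conv b (f n) x \<partial>lborel)
        = (\<integral>\<^sup>+y. f n y * ball_potential b R y \<partial>lborel)"
      by (rule nn_integral_ball_riesz_kernel_conv) measurable
    also have "\<dots> \<le> (\<integral>\<^sup>+y. H * (indicator (ball 0 M) y * f n y) + ennreal \<delta> * f n y \<partial>lborel)"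
      using mult_left_mono[OF M(3), of "f n _"] by (intro nn_integral_mono) (simp add: algebra_simps)
    also have "\<dots> = H * (\<integral>\<^sup>+y. indicator (ball 0 M) y * f n y \<partial>lborel) + ennreal \<delta> * (\<integral>\<^sup>+y. f n y \<partial>lborel)"
      by (simp add: nn_integral_add nn_integral_cmult)
    also have "\<dots> \<le> ennreal (\<epsilon> / 2) + ennreal \<delta> * ennreal C'"
      using near order.trans[OF bounded ennreal_leI[OF \<open>C \<le> C'\<close>]]
      by (intro add_mono mult_left_mono) auto
    also have "\<dots> = ennreal \<epsilon>"
      using \<open>0 < \<epsilon>\<close> \<open>0 < \<delta>\<close> \<open>0 < C'\<close> \<open>\<delta> * C' = \<epsilon> / 2\<close>
      by (simp flip: ennreal_mult ennreal_plus)
    finally show "(\<integral>\<^sup>+x. indicator (ball 0 R) x * riesz_kernel_conv b (f n) x \<partial>lborel)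
        \<le> ennreal \<epsilon>" .
  qed
qed

lemma riesz_pot_eq_riesz_kernel:
  "riesz_pot \<alpha> z = riesz_const CARD('n) \<alpha> * riesz_kernel (real CARD('n) - \<alpha>) (z::real^'n)"
  unfolding riesz_pot_def riesz_kernel_def by simp

lemma abs_riesz_conv_le:
  fixes g g' :: "real ^ 'n \<Rightarrow> real"
  assumes [measurable]: "g \<in> borel_measurable lebesgue" "g' \<in> borel_measurable lborel"
    and g': "AE y in lborel. g y = g' y"
  shows "\<bar>riesz_conv \<alpha> g x\<bar>
    \<le> \<bar>riesz_const CARD('n) \<alpha>\<bar> * enn2real (riesz_kernel_conv (real CARD('n) - \<alpha>) (\<lambda>y. ennreal \<bar>g' y\<bar>) x)"
proof -
  define A where "A = riesz_const CARD('n) \<alpha>"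
  define K where "K y = riesz_kernel (real CARD('n) - \<alpha>) (x - y)" for y :: "real^'n"
  have [measurable]: "K \<in> borel_measurable lebesgue"
    unfolding K_def by (rule measurable_completion) measurable
  have "\<bar>riesz_conv \<alpha> g x\<bar> \<le> (\<integral>y. \<bar>A * K y * g y\<bar> \<partial>lebesgue)"
    using integral_norm_bound[of lebesgue "\<lambda>y. A * K y * g y"]
    by (simp add: riesz_conv_def riesz_pot_eq_riesz_kernel A_def K_def)
  also have "\<dots> = enn2real (\<integral>\<^sup>+y. ennreal \<bar>A * K y * g y\<bar> \<partial>lebesgue)"
    by (rule integral_eq_nn_integral) auto
  also have "(\<integral>\<^sup>+y. ennreal \<bar>A * K y * g y\<bar> \<partial>lebesgue)
      = (\<integral>\<^sup>+y. ennreal \<bar>A\<bar> * (ennreal (K y) * ennreal \<bar>g' y\<bar>) \<partial>lborel)"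
    unfolding nn_integral_completion using g'
    by (intro nn_integral_cong_AE) (auto simp: abs_mult K_def riesz_kernel_nonneg ennreal_mult mult.assoc)
  also have "\<dots> = ennreal \<bar>A\<bar> * riesz_kernel_conv (real CARD('n) - \<alpha>) (\<lambda>y. ennreal \<bar>g' y\<bar>) x"
    unfolding K_def riesz_kernel_conv_def by (rule nn_integral_cmult) measurable
  finally show ?thesis by (simp add: enn2real_mult A_def)
qed

lemma riesz_conv_tendsto_zero:
  fixes g g' :: "nat \<Rightarrow> real ^ 'n \<Rightarrow> real"
  assumes "\<And>k. g k \<in> borel_measurable lebesgue" "\<And>k. g' k \<in> borel_measurable lborel"
    and "\<And>k. AE y in lborel. g k y = g' k y"
    and conv: "(\<lambda>k. riesz_kernel_conv (real CARD('n) - \<alpha>) (\<lambda>y. ennreal \<bar>g' k y\<bar>) x) \<longlonglongrightarrow> 0"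
  shows "(\<lambda>k. riesz_conv \<alpha> (g k) x) \<longlonglongrightarrow> 0"
proof (rule Lim_null_comparison)
  show "eventually (\<lambda>k. norm (riesz_conv \<alpha> (g k) x) \<le> \<bar>riesz_const CARD('n) \<alpha>\<bar>
      * enn2real (riesz_kernel_conv (real CARD('n) - \<alpha>) (\<lambda>y. ennreal \<bar>g' k y\<bar>) x)) sequentially"
    using abs_riesz_conv_le[OF assms(1-3)] by (intro always_eventually allI) simp
  have "(\<lambda>k. enn2real (riesz_kernel_conv (real CARD('n) - \<alpha>) (\<lambda>y. ennreal \<bar>g' k y\<bar>) x)) \<longlonglongrightarrow> 0"
    using conv by (intro tendsto_enn2real) simp_all
  thus "(\<lambda>k. \<bar>riesz_const CARD('n) \<alpha>\<bar>
      * enn2real (riesz_kernel_conv (real CARD('n) - \<alpha>) (\<lambda>y. ennreal \<bar>g' k y\<bar>) x)) \<longlonglongrightarrow> 0"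
    by (rule tendsto_mult_right_zero)
qed

theorem lemma2p6:
  fixes g :: "nat \<Rightarrow> real ^ 'n \<Rightarrow> real" and \<alpha> s :: real
  assumes N3: "CARD('n) \<ge> 3"
    and alpha: "0 < \<alpha>" "\<alpha> < real CARD('n)"
    and s: "1 < s" "s < real CARD('n) / \<alpha>"
    and L1: "\<And>n. integrable lebesgue (g n)"
    and Ls: "\<And>n. g n \<in> borel_measurable lebesgue"
            "\<And>n. integrable lebesgue (\<lambda>x. \<bar>g n x\<bar> powr s)"
    and bdd1: "\<exists>C. \<forall>n. (\<integral>x. \<bar>g n x\<bar> \<partial>lebesgue) \<le> C"
    and bdds: "\<exists>C. \<forall>n. (\<integral>x. \<bar>g n x\<bar> powr s \<partial>lebesgue) powr (1 / s) \<le> C"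
    and loc: "\<And>\<Omega>. open \<Omega> \<Longrightarrow> connected \<Omega> \<Longrightarrow> bounded \<Omega> \<Longrightarrow>
              (\<lambda>n. (LINT x:\<Omega>|lebesgue. \<bar>g n x\<bar> powr s) powr (1 / s)) \<longlonglongrightarrow> 0"
  shows "\<exists>r. strict_mono r \<and>
           (AE x in lebesgue. (\<lambda>k. riesz_conv \<alpha> (g (r k)) x) \<longlonglongrightarrow> 0)"
proof -
  define b where "b = real CARD('n) - \<alpha>"
  have b: "0 < b" "b < DIM(real^'n)" using alpha by (simp_all add: b_def)
  txt \<open>Tonelli on \<open>lborel \<Otimes>\<^sub>M lborel\<close> needs Borel representatives of the \<open>g n\<close>.\<close>
  obtain gb where gb [measurable]: "\<And>n. gb n \<in> borel_measurable lborel"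
    and gb_ae: "\<And>n. AE y in lborel. g n y = gb n y"
    using completion_ex_borel_measurable_real[OF Ls(1)] by metis
  have to_lborel: "(\<integral>\<^sup>+y. u y * ennreal \<bar>g n y\<bar> \<partial>lebesgue) = (\<integral>\<^sup>+y. u y * ennreal \<bar>gb n y\<bar> \<partial>lborel)" for u n
    unfolding nn_integral_completion using gb_ae[of n] by (intro nn_integral_cong_AE) auto
  obtain C where C: "\<And>n. (\<integral>x. \<bar>g n x\<bar> \<partial>lebesgue) \<le> C" using bdd1 by blast
  have "(\<integral>\<^sup>+y. ennreal \<bar>gb n y\<bar> \<partial>lborel) = ennreal (\<integral>y. \<bar>g n y\<bar> \<partial>lebesgue)" for n
    using to_lborel[of "\<lambda>_. 1" n] nn_integral_eq_integral[of lebesgue "\<lambda>y. \<bar>g n y\<bar>"] L1[of n] by simp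
  hence bounded: "(\<integral>\<^sup>+y. ennreal \<bar>gb n y\<bar> \<partial>lborel) \<le> ennreal C" for n
    using C[of n] by (simp add: ennreal_leI)
  have "ball 0 M \<in> fmeasurable lebesgue" for M :: real by (rule lmeasurable_ball)
  hence "(\<lambda>n. \<integral>\<^sup>+y. indicator (ball 0 M) y * ennreal \<bar>g n y\<bar> \<partial>lebesgue) \<longlonglongrightarrow> 0" for M
    using loc[of "ball 0 M"]
    by (intro set_nn_integral_abs_tendsto_zero_if_Lp[OF s(1) _ _ Ls(1,2)]) (auto simp: fmeasurable_def convex_connected)
  hence local: "(\<lambda>n. \<integral>\<^sup>+y. indicator (ball 0 M) y * ennreal \<bar>gb n y\<bar> \<partial>lborel) \<longlonglongrightarrow> 0" for M
    by (simp only: to_lborel)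
  have "(\<lambda>n. \<integral>\<^sup>+x. indicator (ball 0 R) x * riesz_kernel_conv b (\<lambda>y. ennreal \<bar>gb n y\<bar>) x \<partial>lborel) \<longlonglongrightarrow> 0"
    if "0 < R" for R
    by (rule local_riesz_kernel_conv_tendsto_zero[OF b that _ bounded local]) measurable
  then obtain r where r: "strict_mono r"
    "AE x in lborel. (\<lambda>k. riesz_kernel_conv b (\<lambda>y. ennreal \<bar>gb (r k) y\<bar>) x) \<longlonglongrightarrow> 0"
    by (rule AE_subseq_tendsto_zero_if_local_nn_integral[rotated]) measurable
  have "AE x in lebesgue. (\<lambda>k. riesz_conv \<alpha> (g (r k)) x) \<longlonglongrightarrow> 0"
    using AE_completion[OF r(2)]
    by eventually_elim (rule riesz_conv_tendsto_zero[OF Ls(1) gb gb_ae], simp add: b_def)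
  with r(1) show ?thesis by blast
qed

end
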